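(* Let $\omega=(\omega_0,\dots,\omega_{l-1})\in\Psi^l$ be arbitrary. Then for every $x\in[n]$ we have $\mathrm{single}(x,\omega)=\tau(\omega,\{x\})$, and for all nonempty $A_1,A_2\subseteq[n]$ we have $\mathrm{merge}(\tau(\omega,A_1),\tau(\omega,A_2))=\tau(\omega,A_1\cup A_2)$.
   Context: Fix integers $n\ge1$, $l\ge1$, $b\ge1$, and a set $\Psi$ of triples $\psi=(f,g,h)$ of functions with $f:[n]\to\mathbb Z_{\ge0}$, $g:[n]\to[m]$, $h:[m]\to[b]$ for some $m$. Here $[N]:=\{0,\dots,N-1\}$. A state (sketch) is a pair $(B,q)$ with $B:[l]\times[b]\to\mathbb Z$ a table and $q\in\mathbb Z_{\ge0}$. $\mathrm{compress}(B,q)$: while $\sum_{i\in[l],j\in[b]}\lfloor\log_2(B[i,j]+2)\rfloor>33\,b\,l$, set $q\gets q+1$ and $B[i,j]\gets\max(B[i,j]-1,-1)$ for all $i,j$; then return $(B,q)$. $\mathrm{single}(x,\omega)$: let $B[i,j]=-1$ for all $i,j$, then for each $i\in[l]$ with $\omega_i=(f,g,h)$ set $B[i,h(g(x))]=f(x)$; return $\mathrm{compress}(B,0)$. $\mathrm{merge}((B_a,q_a),(B_b,q_b))$: $q\gets\max(q_a,q_b)$, $B[i,j]\gets\max(B_a[i,j]+q_a-q,\;B_b[i,j]+q_b-q)$ for all $i,j$; return $\mathrm{compress}(B,q)$. For nonempty $A\subseteq[n]$: $\tau_0((f,g,h),A)[j]:=\max(\{f(a): a\in A,\ h(g(a))=j\}\cup\{-1\})$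 for $j\in[b]$; $\tau_1(\psi,A,q)[j]:=\max(\tau_0(\psi,A)[j]-q,-1)$; $\tau_2(\omega,A,q)[i,j]:=\tau_1(\omega_i,A,q)[j]$; $q(\omega,A):=\min\{q\in\mathbb Z_{\ge0}: \sum_{i\in[l],j\in[b]}\lfloor\log_2(\tau_2(\omega,A,q)[i,j]+2)\rfloor\le 33\,b\,l\}$; $\tau(\omega,A):=(\tau_2(\omega,A,q(\omega,A)),\,q(\omega,A))$. *)

theory Defs
  imports Complex_Main "HOL-Library.While_Combinator"
begin

(* A hash triple psi = (f,g,h) with f : [n] -> Z_{>=0}, g : [n] -> [m], h : [m] -> [b]. *)
type_synonym triple = "(nat \<Rightarrow> nat) \<times> (nat \<Rightarrow> nat) \<times> (nat \<Rightarrow> nat)"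
(* A table B : [l] x [b] -> Z, represented as a function (only indices i<l, j<b matter). *)
type_synonym table = "nat \<Rightarrow> nat \<Rightarrow> int"
type_synonym state = "table \<times> nat"

definition valid_triple :: "nat \<Rightarrow> nat \<Rightarrow> triple \<Rightarrow> bool" where
  "valid_triple n b \<psi> = (case \<psi> of (f, g, h) \<Rightarrow>
      (\<exists>m. (\<forall>x<n. g x < m) \<and> (\<forall>y<m. h y < b)))"

definition cost :: "nat \<Rightarrow> nat \<Rightarrow> table \<Rightarrow> int" where
  "cost l b B = (\<Sum>i<l. \<Sum>j<b. \<lfloor>log 2 (real_of_int (B i j + 2))\<rfloor>)"

definition compress :: "nat \<Rightarrow> nat \<Rightarrow> state \<Rightarrow> state" where
  "compress l b S = while (\<lambda>(B, q). cost l b B > 33 * int b * int l)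
                          (\<lambda>(B, q). (\<lambda>i j. max (B i j - 1) (-1), q + 1)) S"

definition single :: "nat \<Rightarrow> nat \<Rightarrow> nat \<Rightarrow> (nat \<Rightarrow> triple) \<Rightarrow> state" where
  "single l b x \<omega> = compress l b
     (\<lambda>i j. (case \<omega> i of (f, g, h) \<Rightarrow>
               if i < l \<and> j = h (g x) then int (f x) else -1), 0)"

definition merge :: "nat \<Rightarrow> nat \<Rightarrow> state \<Rightarrow> state \<Rightarrow> state" where
  "merge l b Sa Sb = (case Sa of (Ba, qa) \<Rightarrow> case Sb of (Bb, qb) \<Rightarrow>
     (let q = max qa qb in
       compress l b (\<lambda>i j. max (Ba i j + int qa - int q) (Bb i j + int qb - int q), q)))"

definition tau0 :: "triple \<Rightarrow> nat set \<Rightarrow> nat \<Rightarrow> int" where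
  "tau0 \<psi> A j = (case \<psi> of (f, g, h) \<Rightarrow>
      Max ({int (f a) | a. a \<in> A \<and> h (g a) = j} \<union> {-1}))"

definition tau1 :: "triple \<Rightarrow> nat set \<Rightarrow> nat \<Rightarrow> nat \<Rightarrow> int" where
  "tau1 \<psi> A q j = max (tau0 \<psi> A j - int q) (-1)"

definition tau2 :: "(nat \<Rightarrow> triple) \<Rightarrow> nat set \<Rightarrow> nat \<Rightarrow> table" where
  "tau2 \<omega> A q = (\<lambda>i j. tau1 (\<omega> i) A q j)"

definition qlev :: "nat \<Rightarrow> nat \<Rightarrow> (nat \<Rightarrow> triple) \<Rightarrow> nat set \<Rightarrow> nat" where
  "qlev l b \<omega> A = (LEAST q. cost l b (tau2 \<omega> A q) \<le> 33 * int b * int l)"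

definition tau :: "nat \<Rightarrow> nat \<Rightarrow> (nat \<Rightarrow> triple) \<Rightarrow> nat set \<Rightarrow> state" where
  "tau l b \<omega> A = (tau2 \<omega> A (qlev l b \<omega> A), qlev l b \<omega> A)"

definition state_eq :: "nat \<Rightarrow> nat \<Rightarrow> state \<Rightarrow> state \<Rightarrow> bool" where
  "state_eq l b S T = ((\<forall>i<l. \<forall>j<b. fst S i j = fst T i j) \<and> snd S = snd T)"

end

theory Submission
  imports Defs
begin

text \<open>Each pass of the compress loop lowers every entry by one with clipping at -1, which is exactly
  the step from tau2 at level q to tau2 at level q+1; since the loop stops at the first level whose
  cost is within budget, starting it on tau2 at any level below qlev ends at tau.  A singleton
  sketch starts at level 0.  For merge, tau0 of a union is the pointwise maximum, so rescaling both
  sketches to the level max q1 q2 gives tau2 of the union at that level, and this level is below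
  qlev of the union because qlev is monotone in the set.\<close>

abbreviation cost_bound :: "nat \<Rightarrow> nat \<Rightarrow> int" where
  "cost_bound l b \<equiv> 33 * int b * int l"

lemma cost_cong: "(\<And>i j. i < l \<Longrightarrow> j < b \<Longrightarrow> B i j = B' i j) \<Longrightarrow> cost l b B = cost l b B'"
  unfolding cost_def by (intro sum.cong) auto

lemma cost_mono:
  assumes "\<And>i j. i < l \<Longrightarrow> j < b \<Longrightarrow> -1 \<le> B i j \<and> B i j \<le> B' i j"
  shows "cost l b B \<le> cost l b B'"
proof -
  have "\<lfloor>log 2 (real_of_int (B i j + 2))\<rfloor> \<le> \<lfloor>log 2 (real_of_int (B' i j + 2))\<rfloor>"
    if "-1 \<le> B i j" "B i j \<le> B' i j" for i j
    using that by (intro floor_mono) simp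
  then show ?thesis unfolding cost_def using assms by (intro sum_mono) (meson lessThan_iff)
qed

lemma tau2_Suc: "tau2 \<omega> A (Suc q) i j = max (tau2 \<omega> A q i j - 1) (-1)"
  unfolding tau2_def tau1_def by simp

lemma tau2_ge_minus_one: "-1 \<le> tau2 \<omega> A q i j"
  unfolding tau2_def tau1_def by simp

lemma tau0_singleton:
  "tau0 (f, g, h) {x} j = (if j = h (g x) then int (f x) else -1)"
proof -
  have "{int (f a) | a. a \<in> {x} \<and> h (g a) = j} = (if j = h (g x) then {int (f x)} else {})"
    by auto
  then show ?thesis unfolding tau0_def by (simp add: max_def)
qed

lemma tau0_Un:
  assumes "finite A" "finite B"
  shows "tau0 \<psi> (A \<union> B) j = max (tau0 \<psi> A j) (tau0 \<psi> B j)"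
proof -
  obtain f g h where \<psi>: "\<psi> = (f, g, h)" by (cases \<psi>) auto
  let ?S = "\<lambda>A. {int (f a) | a. a \<in> A \<and> h (g a) = j} \<union> {-1}"
  have fin: "finite (?S A)" if "finite A" for A
    using that by (auto intro: finite_subset[of _ "(\<lambda>a. int (f a)) ` A"])
  have "?S (A \<union> B) = ?S A \<union> ?S B" by auto
  moreover have "Max (?S A \<union> ?S B) = max (Max (?S A)) (Max (?S B))"
    using fin assms by (intro Max_Un) auto
  ultimately have "Max (?S (A \<union> B)) = max (Max (?S A)) (Max (?S B))" by simp
  then show ?thesis unfolding tau0_def \<psi> by simp
qed

lemma tau0_mono: "A \<subseteq> B \<Longrightarrow> finite B \<Longrightarrow> tau0 \<psi> A j \<le> tau0 \<psi> B j"
  using tau0_Un[of A B \<psi> j] by (simp add: Un_absorb1 finite_subset)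

lemma cost_tau2_mono: "A \<subseteq> B \<Longrightarrow> finite B \<Longrightarrow> cost l b (tau2 \<omega> A q) \<le> cost l b (tau2 \<omega> B q)"
  by (intro cost_mono)
     (auto simp: tau2_ge_minus_one tau2_def tau1_def
           intro: max.coboundedI1 diff_right_mono tau0_mono)

text \<open>Beyond the largest tau0 entry every entry is clipped to -1, and a table of -1s costs 0.\<close>

lemma cost_tau2_within_bound_exists: "\<exists>q. cost l b (tau2 \<omega> A q) \<le> cost_bound l b"
proof -
  define K where "K = Max ((\<lambda>(i, j). nat (tau0 (\<omega> i) A j)) ` ({..<l} \<times> {..<b}))"
  have "tau2 \<omega> A (K + 1) i j = -1" if "i < l" "j < b" for i j
  proof -
    have "nat (tau0 (\<omega> i) A j) \<le> K" unfolding K_def using that by (intro Max_ge) auto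
    then show ?thesis unfolding tau2_def tau1_def by simp
  qed
  then have "cost l b (tau2 \<omega> A (K + 1)) = cost l b (\<lambda>_ _. -1)" by (intro cost_cong) auto
  also have "\<dots> = 0" unfolding cost_def by simp
  finally show ?thesis by (intro exI[of _ "K + 1"]) simp
qed

lemma cost_tau2_qlev: "cost l b (tau2 \<omega> A (qlev l b \<omega> A)) \<le> cost_bound l b"
  unfolding qlev_def using cost_tau2_within_bound_exists by (rule LeastI_ex)

lemma cost_tau2_less_qlev: "q < qlev l b \<omega> A \<Longrightarrow> cost_bound l b < cost l b (tau2 \<omega> A q)"
  unfolding qlev_def by (metis not_less_Least not_le)

lemma qlev_mono: "A \<subseteq> B \<Longrightarrow> finite B \<Longrightarrow> qlev l b \<omega> A \<le> qlev l b \<omega> B"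
  unfolding qlev_def[of l b \<omega> A]
  by (rule Least_le) (metis cost_tau2_mono cost_tau2_qlev order_trans)

lemma compress_tau2_eq_tau:
  assumes "q \<le> qlev l b \<omega> A" and "\<And>i j. i < l \<Longrightarrow> j < b \<Longrightarrow> B i j = tau2 \<omega> A q i j"
  shows "state_eq l b (compress l b (B, q)) (tau l b \<omega> A)"
  using assms
proof (induction "qlev l b \<omega> A - q" arbitrary: B q)
  case 0
  then have q: "q = qlev l b \<omega> A" by simp
  have "cost l b B = cost l b (tau2 \<omega> A q)" using 0 by (intro cost_cong) auto
  then have "\<not> cost_bound l b < cost l b B" using q cost_tau2_qlev by (metis not_less)
  then have "compress l b (B, q) = (B, q)"
    unfolding compress_def by (subst while_unfold) simp
  then show ?case using 0 q unfolding state_eq_def tau_def by auto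
next
  case (Suc d)
  then have "q < qlev l b \<omega> A" by simp
  moreover have "cost l b B = cost l b (tau2 \<omega> A q)" using Suc by (intro cost_cong) auto
  ultimately have "compress l b (B, q) = compress l b (\<lambda>i j. max (B i j - 1) (-1), Suc q)"
    using cost_tau2_less_qlev unfolding compress_def by (subst while_unfold) simp
  also have "state_eq l b \<dots> (tau l b \<omega> A)"
    using Suc by (intro Suc.hyps) (auto simp: tau2_Suc)
  finally show ?case .
qed

lemma single_eq_tau: "state_eq l b (single l b x \<omega>) (tau l b \<omega> {x})"
  unfolding single_def
  by (intro compress_tau2_eq_tau)
     (auto simp: tau2_def tau1_def tau0_singleton split: prod.splits)

lemma max_rescale_clipped:
  "(q::int) = max q1 q2 \<Longrightarrow>
    max (max (t1 - q1) (-1) + q1 - q) (max (t2 - q2) (-1) + q2 - q) = max (max t1 t2 - q) (-1)"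
  by (auto simp: max_def)

lemma merge_tau_eq_tau:
  assumes "finite A1" "finite A2"
  shows "state_eq l b (merge l b (tau l b \<omega> A1) (tau l b \<omega> A2)) (tau l b \<omega> (A1 \<union> A2))"
proof -
  let ?q1 = "qlev l b \<omega> A1" and ?q2 = "qlev l b \<omega> A2"
  have "max ?q1 ?q2 \<le> qlev l b \<omega> (A1 \<union> A2)"
    using assms by (simp add: qlev_mono)
  then show ?thesis
    unfolding merge_def tau_def[of _ _ _ A1] tau_def[of _ _ _ A2] Let_def prod.case
    by (intro compress_tau2_eq_tau)
       (simp_all add: tau2_def tau1_def tau0_Un assms max_rescale_clipped of_nat_max)
qed

theorem lemma6:
  fixes n l b :: nat and \<Psi> :: "triple set" and \<omega> :: "nat \<Rightarrow> triple"
  assumes "n \<ge> 1" and "l \<ge> 1" and "b \<ge> 1"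
    and "\<forall>\<psi>\<in>\<Psi>. valid_triple n b \<psi>"
    and "\<forall>i<l. \<omega> i \<in> \<Psi>"
  shows "(\<forall>x<n. state_eq l b (single l b x \<omega>) (tau l b \<omega> {x}))
       \<and> (\<forall>A1 A2. A1 \<noteq> {} \<longrightarrow> A2 \<noteq> {} \<longrightarrow> A1 \<subseteq> {..<n} \<longrightarrow> A2 \<subseteq> {..<n} \<longrightarrow>
            state_eq l b (merge l b (tau l b \<omega> A1) (tau l b \<omega> A2)) (tau l b \<omega> (A1 \<union> A2)))"
  by (auto intro: single_eq_tau merge_tau_eq_tau finite_subset)

end
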